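(* Let $B\ge1$ be an integer and $\alpha=1/\sqrt{B}$. Consider a residual network with hidden states $\mathbf{h}^0=\mathbf{x}\in\mathbb{R}^d$ and $\mathbf{h}^{b+1}=\mathbf{h}^b+\alpha F_b(\mathbf{h}^b)$ for $b=0,\ldots,B-1$, where each $F_b:\mathbb{R}^d\to\mathbb{R}^d$ is differentiable, and let $\ell$ be a differentiable loss of the output $\mathbf{h}^B$. Write $\mathbf{g}^b=\frac{\partial\ell}{\partial\mathbf{h}^b}$, so that $\mathbf{g}^b=\mathbf{g}^{b+1}+\alpha J_b^T\mathbf{g}^{b+1}$ where $J_b$ is the Jacobian of $F_b$ at $\mathbf{h}^b$. Assume that for each $b$, $\lVert J_b^T\mathbf{u}\rVert=\lVert\mathbf{u}\rVert$ for every $\mathbf{u}\in\mathbb{R}^d$, and $\langle\mathbf{g}^{b+1},J_b^T\mathbf{g}^{b+1}\rangle=0$. Then there exists $c\in[\sqrt{2},\sqrt{e}]$ such that $\lVert\mathbf{g}^0\rVert=c\cdot\lVert\mathbf{g}^B\rVert$.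
   Context: $\langle\cdot,\cdot\rangle$ is the Euclidean dot product; gradients are column vectors, and $J_b^T\mathbf{g}^{b+1}$ is the vector-Jacobian product $\frac{\partial F_b}{\partial\mathbf{h}^b}\cdot\frac{\partial\ell}{\partial\mathbf{h}^{b+1}}$. *)

theory Defs
  imports "HOL-Analysis.Analysis"
begin

definition resnet_map ::
  "real \<Rightarrow> (nat \<Rightarrow> real^'n \<Rightarrow> real^'n) \<Rightarrow> nat \<Rightarrow> nat \<Rightarrow> real^'n \<Rightarrow> real^'n" where
  "resnet_map \<alpha> F i j y = foldl (\<lambda>z k. z + \<alpha> *\<^sub>R F k z) y [i..<j]"

end

theory Submission
  imports Defs
begin

(* By the chain rule, backpropagating through block b sends g(b+1) to
   g(b) = g(b+1) + alpha J_b^T g(b+1). The two summands are orthogonal and J_b^T preserves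
   norms, so Pythagoras gives |g(b)|^2 = (1 + 1/B) |g(b+1)|^2; hence
   |g(0)|^2 = (1 + 1/B)^B |g(B)|^2, and 2 <= (1 + 1/B)^B <= e by Bernoulli's inequality
   and 1 + t <= exp t. *)

lemma resnet_map_Suc_left:
  "i < j \<Longrightarrow> resnet_map \<alpha> F i j y = resnet_map \<alpha> F (Suc i) j (y + \<alpha> *\<^sub>R F i y)"
  unfolding resnet_map_def by (simp add: upt_conv_Cons)

lemma transpose_matrix_mult_eq_adjoint:
  fixes L :: "real^'n \<Rightarrow> real^'m"
  assumes "linear L"
  shows "transpose (matrix L) *v u = adjoint L u"
  using assms by (simp add: matrix_adjoint[symmetric] adjoint_linear matrix_works)

lemma gradient_residual_step:
  fixes F L :: "real^'n \<Rightarrow> real^'n" and f :: "real^'n \<Rightarrow> real"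
  assumes F: "(F has_derivative L) (at y)"
    and f: "(f has_derivative (\<lambda>w. u \<bullet> w)) (at (y + \<alpha> *\<^sub>R F y))"
    and comp: "(f \<circ> (\<lambda>z. z + \<alpha> *\<^sub>R F z) has_derivative (\<lambda>w. v \<bullet> w)) (at y)"
  shows "v = u + \<alpha> *\<^sub>R (transpose (matrix L) *v u)"
proof -
  have lin: "linear L"
    using F has_derivative_linear by blast
  have "((\<lambda>z. z + \<alpha> *\<^sub>R F z) has_derivative (\<lambda>w. w + \<alpha> *\<^sub>R L w)) (at y)"
    by (intro derivative_intros F)
  from diff_chain_at[OF this f]
  have "(f \<circ> (\<lambda>z. z + \<alpha> *\<^sub>R F z) has_derivative (\<lambda>w. u \<bullet> (w + \<alpha> *\<^sub>R L w))) (at y)"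
    by (simp add: o_def)
  from has_derivative_unique[OF comp this]
  have "v \<bullet> w = u \<bullet> (w + \<alpha> *\<^sub>R L w)" for w
    by metis
  also have "u \<bullet> (w + \<alpha> *\<^sub>R L w) = (u + \<alpha> *\<^sub>R adjoint L u) \<bullet> w" for w
    using adjoint_works[OF lin, of w u]
    by (simp add: inner_add_left inner_add_right inner_commute)
  finally have "v = u + \<alpha> *\<^sub>R adjoint L u"
    using vector_eq_rdot by blast
  then show ?thesis
    unfolding transpose_matrix_mult_eq_adjoint[OF lin] .
qed

lemma norm_add_scaleR_orthogonal_sq:
  fixes u v :: "'a::real_inner"
  assumes "u \<bullet> v = 0"
  shows "(norm (u + a *\<^sub>R v))\<^sup>2 = (norm u)\<^sup>2 + a\<^sup>2 * (norm v)\<^sup>2"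
  using assms norm_add_Pythagorean[of u "a *\<^sub>R v"]
  by (simp add: orthogonal_def power_mult_distrib)

lemma recurrence_down_power:
  fixes x :: "nat \<Rightarrow> 'a::monoid_mult"
  assumes "\<And>b. b < n \<Longrightarrow> x b = q * x (Suc b)"
  shows "x 0 = q ^ n * x n"
  using assms
proof (induction n)
  case (Suc n)
  then have "x 0 = q ^ n * x n" by simp
  also have "\<dots> = q ^ Suc n * x (Suc n)"
    using Suc.prems[of n] by (simp only: power_Suc2 mult.assoc lessI)
  finally show ?case .
qed simp

lemma one_plus_inverse_power_bounds:
  assumes "n \<ge> 1"
  shows "2 \<le> (1 + 1 / real n) ^ n" and "(1 + 1 / real n) ^ n \<le> exp 1"
proof -
  have "1 + real n * (1 / real n) \<le> (1 + 1 / real n) ^ n"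
    by (rule Bernoulli_inequality) (simp add: order_trans[of _ 0])
  then show "2 \<le> (1 + 1 / real n) ^ n"
    using assms by simp
  show "(1 + 1 / real n) ^ n \<le> exp 1"
    using exp_ge_one_plus_x_over_n_power_n[of n 1] assms by simp
qed

theorem theorem4:
  fixes B :: nat and \<alpha> :: real and x :: "real^'n"
    and F :: "nat \<Rightarrow> real^'n \<Rightarrow> real^'n"
    and F' :: "nat \<Rightarrow> real^'n \<Rightarrow> (real^'n \<Rightarrow> real^'n)"
    and loss :: "real^'n \<Rightarrow> real"
    and h g :: "nat \<Rightarrow> real^'n"
  assumes B: "B \<ge> 1"
    and alpha: "\<alpha> = 1 / sqrt (real B)"
    and h0: "h 0 = x"
    and hstep: "\<And>b. b < B \<Longrightarrow> h (Suc b) = h b + \<alpha> *\<^sub>R F b (h b)"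
    and F_diff: "\<And>b y. b < B \<Longrightarrow> (F b has_derivative F' b y) (at y)"
    and loss_diff: "\<And>y. loss differentiable (at y)"
    and g_grad: "\<And>b. b \<le> B \<Longrightarrow>
        ((loss \<circ> resnet_map \<alpha> F b B) has_derivative (\<lambda>w. g b \<bullet> w)) (at (h b))"
    and J_iso: "\<And>b u. b < B \<Longrightarrow>
        norm (transpose (matrix (F' b (h b))) *v u) = norm u"
    and J_orth: "\<And>b. b < B \<Longrightarrow>
        g (Suc b) \<bullet> (transpose (matrix (F' b (h b))) *v g (Suc b)) = 0"
  shows "\<exists>c \<in> {sqrt 2 .. sqrt (exp 1)}. norm (g 0) = c * norm (g B)"
proof -
  have backprop: "g b = g (Suc b) + \<alpha> *\<^sub>R (transpose (matrix (F' b (h b))) *v g (Suc b))"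
    if "b < B" for b
  proof (rule gradient_residual_step[OF F_diff[OF that]])
    show "(loss \<circ> resnet_map \<alpha> F (Suc b) B has_derivative (\<bullet>) (g (Suc b)))
        (at (h b + \<alpha> *\<^sub>R F b (h b)))"
      using g_grad[of "Suc b"] hstep[OF that] that by simp
    show "((loss \<circ> resnet_map \<alpha> F (Suc b) B) \<circ> (\<lambda>z. z + \<alpha> *\<^sub>R F b z)
        has_derivative (\<bullet>) (g b)) (at (h b))"
      using g_grad[of b] that by (simp add: o_def resnet_map_Suc_left)
  qed
  have "(norm (g b))\<^sup>2 = (1 + 1 / real B) * (norm (g (Suc b)))\<^sup>2" if "b < B" for b
    using backprop[OF that] norm_add_scaleR_orthogonal_sq[OF J_orth[OF that], of \<alpha>]
      J_iso[OF that] alpha B by (simp add: power_divide algebra_simps)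
  then have "(norm (g 0))\<^sup>2 = (1 + 1 / real B) ^ B * (norm (g B))\<^sup>2"
    by (rule recurrence_down_power)
  then have "norm (g 0) = sqrt ((1 + 1 / real B) ^ B) * norm (g B)"
    by (metis norm_ge_zero real_sqrt_abs real_sqrt_mult abs_of_nonneg)
  moreover have "sqrt ((1 + 1 / real B) ^ B) \<in> {sqrt 2 .. sqrt (exp 1)}"
    using one_plus_inverse_power_bounds[OF B] by simp
  ultimately show ?thesis by blast
qed

end
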